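(* Consider the hybrid system on $\mathbb{R}^n$ $$\dot x = f(x) \quad (x \notin S), \qquad x^+ = g(x) \quad (x \in S),$$ with $f,g$ smooth, $S=\{x: c(x)=0\}$ a flat switching surface with $c$ linear (affine) in $x$ and normal vector $z(x)$. Let $A(x)=\frac{\partial f}{\partial x}(x)$, $Q(x)=f(x)f(x)^T$, and let $M(x)$ be a smooth symmetric positive-definite matrix function with $W(x):=M(x)^{-1}$. Suppose: (1) there exist a scalar function $\alpha(x)\ge 0$ and a function $\beta(x)$ with $\alpha(x)f(x)-W(x)z(x)=\beta(x)c(x)$ for all $x$; (2) for some $\lambda>0$ and some scalar function $\rho(x)\ge 0$, $$W(x)A(x)^T+A(x)W(x)-\dot W(x)+2\lambda W(x)-\rho(x)Q(x)\preceq 0;$$ (3) for some scalar function $\zeta(x)\ge 0$, $$\begin{bmatrix} W(x)+\zeta(x)Q(x) & W(x)\frac{\partial g}{\partial x}(x)^T\\ \frac{\partial g}{\partial x}(x)W(x) & W(x)\end{bmatrix}\succeq 0.$$ Then the overall hybrid system is contracting with respect to the metric $M$; i.e. the continuous dynamics are transverse contracting with rate $\lambda$ with respect to $V(x,\delta_x)=\sqrt{\delta_x^TM(x)\delta_x}$, all trajectories approach $S$ orthogonally with respect to $M$ (for $x\in S$ and $\delta_x$ tangent to $S$, $f(x)^TM(x)\delta_x=0$), and the jump satisfies $\delta_x^T\left(\frac{\partial g}{\partial x}^TM\frac{\partial g}{\partial x}-M\right)\delta_x\le 0$ for all $\delta_x$ with $\delta_x^TM(x)f(x)=0$.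
   Context: $\dot W(x)$ denotes the derivative of $W$ along the flow, $\dot W(x)=\sum_{i=1}^n \frac{\partial W}{\partial x_i}(x) f_i(x)$. Transverse contraction with rate $\lambda$ of $\dot x=f(x)$ with respect to $V$ means $\frac{\partial V}{\partial x} f(x) + \frac{\partial V}{\partial \delta_x}A(x)\delta_x \le -\lambda V(x,\delta_x)$ for all $\delta_x\neq 0$ with $\delta_x^TM(x)f(x)=0$. The matrix inequalities are required pointwise in $x$ (in the region of interest). *)

theory Defs
  imports "HOL-Analysis.Analysis"
begin

definition psd :: "real^'m^'m \<Rightarrow> bool" where
  "psd P \<longleftrightarrow> transpose P = P \<and> (\<forall>v. 0 \<le> v \<bullet> (P *v v))"

definition nsd :: "real^'m^'m \<Rightarrow> bool" where
  "nsd P \<longleftrightarrow> psd (- P)"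

definition pd :: "real^'m^'m \<Rightarrow> bool" where
  "pd P \<longleftrightarrow> transpose P = P \<and> (\<forall>v. v \<noteq> 0 \<longrightarrow> 0 < v \<bullet> (P *v v))"

definition outer :: "real^'n \<Rightarrow> real^'n \<Rightarrow> real^'n^'n" where
  "outer u v = (\<chi> i j. u $ i * v $ j)"

definition block2 :: "real^'n^'n \<Rightarrow> real^'n^'n \<Rightarrow> real^'n^'n \<Rightarrow> real^'n^'n
    \<Rightarrow> real^('n + 'n)^('n + 'n)" where
  "block2 P B C D = (\<chi> i j. case (i, j) of
       (Inl i', Inl j') \<Rightarrow> P $ i' $ j'
     | (Inl i', Inr j') \<Rightarrow> B $ i' $ j'
     | (Inr i', Inl j') \<Rightarrow> C $ i' $ j'
     | (Inr i', Inr j') \<Rightarrow> D $ i' $ j')"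

text \<open>Derivative of a (matrix) function along the flow of f:
  F-dot(x) = sum_i dF/dx_i (x) f_i(x) = DF(x) (f x).\<close>
definition flow_deriv :: "(real^'n \<Rightarrow> 'b::real_normed_vector) \<Rightarrow> (real^'n \<Rightarrow> real^'n)
    \<Rightarrow> real^'n \<Rightarrow> 'b" where
  "flow_deriv F f x = frechet_derivative F (at x) (f x)"

definition transverse_contracting ::
  "(real^'n \<Rightarrow> real^'n) \<Rightarrow> (real^'n \<Rightarrow> real^'n^'n) \<Rightarrow> (real^'n \<Rightarrow> real^'n^'n)
     \<Rightarrow> (real^'n \<Rightarrow> real^'n \<Rightarrow> real) \<Rightarrow> real \<Rightarrow> bool" where
  "transverse_contracting f A M V lam \<longleftrightarrow>
     (\<forall>x dx. dx \<noteq> 0 \<and> dx \<bullet> (M x *v f x) = 0 \<longrightarrow>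
        frechet_derivative (\<lambda>y. V y dx) (at x) (f x)
        + frechet_derivative (\<lambda>d. V x d) (at dx) (A x *v dx) \<le> - lam * V x dx)"

end

theory Submission
  imports Defs
begin

(* All three claims are pointwise consequences of the dual matrix inequalities, read in the
   covector u = M dx (so dx = W u).  Differentiating W M = I gives W' = - W M' W, hence
     u^T (W A^T + A W - W' + 2 lam W) u = 2 dx^T M A dx + dx^T M' dx + 2 lam dx^T M dx,
   which is 2 V (V' + lam V) for V = sqrt (dx^T M dx).  Transversality dx^T M f = 0 says
   f^T u = 0, which annihilates the multiplier terms rho Q and zeta Q.  Testing the block
   inequality with (M dx, - M g' dx) gives the jump inequality, and on S condition (1) reads
   alpha f = W z, so M f is a multiple of the normal a.  The argument never differentiates f or g. *)

lemma pd_mult_matrix_inv: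
  fixes M :: "real^'n^'n"
  assumes "pd M"
  shows "M ** matrix_inv M = mat 1"
proof -
  have "M *v x = 0 \<Longrightarrow> x = 0" for x
    using assms unfolding pd_def by force
  then have "invertible M"
    using matrix_left_invertible_ker invertible_left_inverse by blast
  then show ?thesis
    unfolding matrix_inv_def invertible_def by (rule someI2_ex) blast
qed

lemma inner_symmetric_matrix:
  fixes M :: "real^'n^'n"
  assumes "transpose M = M"
  shows "x \<bullet> (M *v y) = (M *v x) \<bullet> y"
  by (metis assms dot_lmul_matrix vector_transpose_matrix)

lemma inner_transpose_matrix:
  fixes A :: "real^'n^'n"
  shows "x \<bullet> (transpose A *v y) = (A *v x) \<bullet> y"
  by (metis dot_lmul_matrix inner_commute vector_transpose_matrix transpose_transpose)

lemma inner_matrix_inverse: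
  fixes M W :: "real^'n^'n"
  assumes "transpose M = M" "M ** W = mat 1"
  shows "(M *v x) \<bullet> (W *v y) = x \<bullet> y"
proof -
  have "(M *v x) \<bullet> (W *v y) = x \<bullet> (M *v (W *v y))"
    using assms(1) by (simp add: inner_symmetric_matrix)
  also have "\<dots> = x \<bullet> y"
    by (simp add: matrix_vector_mul_assoc assms(2))
  finally show ?thesis .
qed

lemma outer_mult_vector: "outer u v *v w = (v \<bullet> w) *\<^sub>R u"
  by (simp add: outer_def vec_eq_iff matrix_vector_mult_def inner_vec_def sum_distrib_left
      mult.commute mult.left_commute)

lemma uminus_matrix_mult: "(- (A::real^'n^'n)) ** B = - (A ** B)"
  by (vector matrix_matrix_mult_def sum_negf)

lemma uminus_matrix_vector_mult: "(- (A::real^'n^'n)) *v v = - (A *v v)"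
  by (vector matrix_vector_mult_def sum_negf)

lemma inner_block2:
  fixes P B C D :: "real^'n^'n" and p q :: "real^'n"
  defines "v \<equiv> \<chi> i. case i of Inl j \<Rightarrow> p $ j | Inr j \<Rightarrow> q $ j"
  shows "v \<bullet> (block2 P B C D *v v)
       = p \<bullet> (P *v p) + p \<bullet> (B *v q) + q \<bullet> (C *v p) + q \<bullet> (D *v q)"
  unfolding v_def
  apply (simp add: inner_vec_def matrix_vector_mult_def block2_def)
  apply (simp add: UNIV_Plus_UNIV[symmetric] sum.Plus del: UNIV_Plus_UNIV)
  apply (simp add: sum.distrib sum_distrib_left algebra_simps)
  done

lemma bounded_bilinear_matrix_matrix_mult:
  "bounded_bilinear ((**) :: real^'n^'n \<Rightarrow> real^'n^'n \<Rightarrow> real^'n^'n)"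
proof -
  have "(A + B) ** C = A ** C + B ** C" for A B C :: "real^'n^'n"
    by (vector matrix_matrix_mult_def sum.distrib[symmetric] field_simps)
  then show ?thesis
    unfolding bilinear_conv_bounded_bilinear[symmetric] bilinear_def
    by (auto intro!: linearI simp: matrix_add_ldistrib scalar_matrix_assoc matrix_scalar_ac)
qed

lemma bounded_linear_matrix_vector_mult_left: "bounded_linear (\<lambda>P::real^'n^'n. P *v v)"
  unfolding linear_conv_bounded_linear[symmetric]
  by (auto intro!: linearI simp: matrix_vector_mult_add_rdistrib scaleR_matrix_vector_assoc)

lemma has_derivative_matrix_inverse_eq:
  fixes M W :: "real^'m \<Rightarrow> real^'n^'n"
  assumes inverse: "\<And>y. M y ** W y = mat 1"
    and M': "(M has_derivative M') (at x)" and W': "(W has_derivative W') (at x)"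
  shows "W' h = - (W x ** M' h ** W x)"
proof -
  have WM: "W y ** M y = mat 1" for y
    using inverse matrix_left_right_inverse by blast
  have "((\<lambda>y. W y ** M y) has_derivative (\<lambda>h. W x ** M' h + W' h ** M x)) (at x)"
    by (rule bounded_bilinear.FDERIV[OF bounded_bilinear_matrix_matrix_mult W' M'])
  moreover have "((\<lambda>y. W y ** M y) has_derivative (\<lambda>h. 0)) (at x)"
    by (simp add: WM)
  ultimately have "(\<lambda>h. W x ** M' h + W' h ** M x) = (\<lambda>h. 0)"
    by (rule has_derivative_unique)
  then have "W x ** M' h + W' h ** M x = 0"
    by (rule fun_cong)
  then have WM': "W' h ** M x = - (W x ** M' h)"
    by (simp only: add_eq_0_iff)
  have "W' h = (W' h ** M x) ** W x"
    by (simp add: matrix_mul_assoc[symmetric] inverse)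
  also have "\<dots> = - (W x ** M' h ** W x)"
    by (simp add: WM' uminus_matrix_mult)
  finally show ?thesis .
qed

lemma has_derivative_sqrt_quadratic_form_metric:
  fixes M :: "real^'m \<Rightarrow> real^'n^'n"
  assumes M': "(M has_derivative M') (at x)" and pos: "0 < d \<bullet> (M x *v d)"
  shows "((\<lambda>y. sqrt (d \<bullet> (M y *v d))) has_derivative
           (\<lambda>h. d \<bullet> (M' h *v d) / (2 * sqrt (d \<bullet> (M x *v d))))) (at x)"
proof -
  have "((\<lambda>y. d \<bullet> (M y *v d)) has_derivative (\<lambda>h. d \<bullet> (M' h *v d))) (at x)"
    using bounded_linear.has_derivative[OF bounded_linear_compose
        [OF bounded_linear_inner_right bounded_linear_matrix_vector_mult_left] M']
    by simp
  from has_derivative_real_sqrt[OF pos this] show ?thesis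
    by (simp only: inverse_eq_divide divide_divide_eq_left times_divide_eq_right mult.commute mult_1)
qed

lemma has_derivative_sqrt_quadratic_form_vector:
  fixes P :: "real^'n^'n"
  assumes sym: "transpose P = P" and pos: "0 < d \<bullet> (P *v d)"
  shows "((\<lambda>e. sqrt (e \<bullet> (P *v e))) has_derivative
           (\<lambda>h. (P *v d) \<bullet> h / sqrt (d \<bullet> (P *v d)))) (at d)"
proof -
  have quad: "((\<lambda>e. e \<bullet> (P *v e)) has_derivative (\<lambda>h. d \<bullet> (P *v h) + h \<bullet> (P *v d))) (at d)"
    using has_derivative_inner[OF has_derivative_id
        bounded_linear.has_derivative[OF matrix_vector_mul_bounded_linear has_derivative_id]]
    by (simp only: id_apply)
  have sym_form: "d \<bullet> (P *v h) + h \<bullet> (P *v d) = 2 * ((P *v d) \<bullet> h)" for h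
    using inner_symmetric_matrix[OF sym, of d h] by (simp add: inner_commute[of h])
  have "2 * t * (inverse r / 2) = t / r" for t r :: real
    by (simp add: inverse_eq_divide)
  with has_derivative_real_sqrt[OF pos quad] show ?thesis
    by (simp only: sym_form)
qed

lemma dual_lmi_imp_quadratic_decay:
  fixes M W A Mdot Wdot :: "real^'n^'n" and f v :: "real^'n"
  assumes sym: "transpose M = M" and inv: "M ** W = mat 1"
    and Wdot: "Wdot = - (W ** Mdot ** W)"
    and lmi: "nsd (W ** transpose A + A ** W - Wdot + (2 * lam) *\<^sub>R W - \<rho> *\<^sub>R outer f f)"
    and transverse: "v \<bullet> (M *v f) = 0"
  shows "v \<bullet> (Mdot *v v) + 2 * ((M *v v) \<bullet> (A *v v)) \<le> - 2 * lam * (v \<bullet> (M *v v))"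
proof -
  define u where "u = M *v v"
  have "W ** M = mat 1"
    using inv matrix_left_right_inverse by blast
  then have Wu: "W *v u = v"
    by (simp add: u_def matrix_vector_mul_assoc)
  have WAt: "u \<bullet> ((W ** transpose A) *v u) = u \<bullet> (A *v v)"
    by (simp only: u_def matrix_vector_mul_assoc[symmetric] inner_matrix_inverse[OF sym inv]
        inner_transpose_matrix inner_commute[of "A *v v"])
  have AW: "u \<bullet> ((A ** W) *v u) = u \<bullet> (A *v v)"
    by (simp only: matrix_vector_mul_assoc[symmetric] Wu)
  have WdotW: "u \<bullet> (Wdot *v u) = - (v \<bullet> (Mdot *v v))"
    by (simp only: Wdot u_def uminus_matrix_vector_mult inner_minus_right
        matrix_vector_mul_assoc[symmetric] inner_matrix_inverse[OF sym inv] Wu[unfolded u_def])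
  have WW: "u \<bullet> (W *v u) = v \<bullet> u"
    by (simp only: u_def inner_matrix_inverse[OF sym inv])
  have "f \<bullet> u = 0"
    using transverse inner_symmetric_matrix[OF sym, of f v] by (simp add: u_def inner_commute)
  then have Q: "u \<bullet> (outer f f *v u) = 0"
    by (simp add: outer_mult_vector inner_commute)
  have "0 \<le> u \<bullet> (- (W ** transpose A + A ** W - Wdot + (2 * lam) *\<^sub>R W - \<rho> *\<^sub>R outer f f) *v u)"
    using lmi unfolding nsd_def psd_def by blast
  also have "\<dots> = - (2 * (u \<bullet> (A *v v)) + v \<bullet> (Mdot *v v) + 2 * lam * (v \<bullet> u))"
    by (simp only: uminus_matrix_vector_mult matrix_vector_mult_add_rdistrib
        matrix_vector_mult_diff_rdistrib scaleR_matrix_vector_assoc[symmetric] inner_minus_right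
        inner_add_right inner_diff_right inner_scaleR_right WAt AW WdotW WW Q)
  finally show ?thesis
    by (simp add: u_def inner_commute[of "M *v v"])
qed

lemma transverse_contracting_of_dual_lmi:
  fixes f :: "real^'n \<Rightarrow> real^'n" and A M W :: "real^'n \<Rightarrow> real^'n^'n"
  assumes M_pd: "\<And>x. pd (M x)" and M_diff: "\<And>x. M differentiable (at x)"
    and inv: "\<And>x. M x ** W x = mat 1" and W_diff: "\<And>x. W differentiable (at x)"
    and lmi: "\<And>x. nsd (W x ** transpose (A x) + A x ** W x - flow_deriv W f x
                        + (2 * lam) *\<^sub>R W x - \<rho> x *\<^sub>R outer (f x) (f x))"
  shows "transverse_contracting f A M (\<lambda>x dx. sqrt (dx \<bullet> (M x *v dx))) lam"
  unfolding transverse_contracting_def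
proof (intro allI impI, elim conjE)
  fix x dx :: "real^'n"
  assume "dx \<noteq> 0" and transverse: "dx \<bullet> (M x *v f x) = 0"
  define s where "s = dx \<bullet> (M x *v dx)"
  have sym: "transpose (M x) = M x"
    using M_pd unfolding pd_def by blast
  have "s > 0"
    using \<open>dx \<noteq> 0\<close> M_pd unfolding pd_def s_def by blast
  obtain M' W' where M': "(M has_derivative M') (at x)" and W': "(W has_derivative W') (at x)"
    using M_diff W_diff unfolding differentiable_def by blast
  have Wdot: "flow_deriv W f x = - (W x ** M' (f x) ** W x)"
    unfolding flow_deriv_def frechet_derivative_at[OF W', symmetric]
    by (rule has_derivative_matrix_inverse_eq[OF inv M' W'])
  have decay: "dx \<bullet> (M' (f x) *v dx) + 2 * ((M x *v dx) \<bullet> (A x *v dx)) \<le> - 2 * lam * s"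
    unfolding s_def by (rule dual_lmi_imp_quadratic_decay[OF sym inv Wdot lmi transverse])
  have "frechet_derivative (\<lambda>y. sqrt (dx \<bullet> (M y *v dx))) (at x) (f x)
      + frechet_derivative (\<lambda>d. sqrt (d \<bullet> (M x *v d))) (at dx) (A x *v dx)
      = (dx \<bullet> (M' (f x) *v dx) + 2 * ((M x *v dx) \<bullet> (A x *v dx))) / (2 * sqrt s)"
    using has_derivative_sqrt_quadratic_form_metric[OF M', of dx]
      has_derivative_sqrt_quadratic_form_vector[OF sym, of dx] \<open>s > 0\<close>
    by (simp add: s_def frechet_derivative_at[symmetric] add_divide_distrib)
  also have "\<dots> \<le> - 2 * lam * s / (2 * sqrt s)"
    using \<open>s > 0\<close> by (intro divide_right_mono[OF decay]) simp
  also have "\<dots> = - lam * sqrt s"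
    using \<open>s > 0\<close> by (simp add: field_simps)
  finally show "frechet_derivative (\<lambda>y. sqrt (dx \<bullet> (M y *v dx))) (at x) (f x)
      + frechet_derivative (\<lambda>d. sqrt (d \<bullet> (M x *v d))) (at dx) (A x *v dx)
      \<le> - lam * sqrt (dx \<bullet> (M x *v dx))"
    unfolding s_def .
qed

lemma metric_normal_orthogonal_to_tangent:
  fixes M W :: "real^'n^'n" and f z a d :: "real^'n"
  assumes sym: "transpose M = M" and inv: "M ** W = mat 1"
    and aligned: "\<alpha> *\<^sub>R f = W *v z" and "z \<noteq> 0" and normal: "z = k *\<^sub>R a"
    and tangent: "a \<bullet> d = 0"
  shows "f \<bullet> (M *v d) = 0"
proof -
  have Mz: "M *v (W *v z) = z"
    by (simp add: matrix_vector_mul_assoc inv)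
  have "\<alpha> \<noteq> 0"
    using aligned Mz \<open>z \<noteq> 0\<close> by auto
  have "\<alpha> *\<^sub>R (M *v f) = z"
    by (simp flip: matrix_vector_mult_scaleR add: aligned Mz)
  then have "\<alpha> * (f \<bullet> (M *v d)) = k * (a \<bullet> d)"
    by (simp add: normal inner_symmetric_matrix[OF sym] flip: inner_scaleR_left)
  then show ?thesis
    using \<open>\<alpha> \<noteq> 0\<close> tangent by simp
qed

lemma jump_nonexpansive_of_block_lmi:
  fixes M W G :: "real^'n^'n" and f d :: "real^'n"
  assumes sym: "transpose M = M" and inv: "M ** W = mat 1"
    and lmi: "psd (block2 (W + \<zeta> *\<^sub>R outer f f) (W ** transpose G) (G ** W) W)"
    and transverse: "d \<bullet> (M *v f) = 0"
  shows "d \<bullet> ((transpose G ** M ** G - M) *v d) \<le> 0"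
proof -
  define p where "p = M *v d"
  define q where "q = - (M *v (G *v d))"
  have "W ** M = mat 1"
    using inv matrix_left_right_inverse by blast
  then have Wp: "W *v p = d"
    by (simp add: p_def matrix_vector_mul_assoc)
  have "f \<bullet> p = 0"
    using transverse inner_symmetric_matrix[OF sym, of f d] by (simp add: p_def inner_commute)
  then have P: "p \<bullet> ((W + \<zeta> *\<^sub>R outer f f) *v p) = d \<bullet> (M *v d)"
    by (simp add: p_def matrix_vector_mult_add_rdistrib inner_add_right outer_mult_vector
        inner_matrix_inverse[OF sym inv] scaleR_matrix_vector_assoc[symmetric] inner_commute[of _ f]
        del: scaleR_matrix_vector_assoc)
  have B: "p \<bullet> ((W ** transpose G) *v q) = - ((G *v d) \<bullet> (M *v (G *v d)))"
    by (simp only: p_def q_def matrix_vector_mul_assoc[symmetric] inner_matrix_inverse[OF sym inv]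
        inner_transpose_matrix inner_minus_right)
  have C: "q \<bullet> ((G ** W) *v p) = - ((G *v d) \<bullet> (M *v (G *v d)))"
    by (simp only: q_def matrix_vector_mul_assoc[symmetric] Wp inner_minus_left inner_commute[of "M *v _"])
  have D: "q \<bullet> (W *v q) = (G *v d) \<bullet> (M *v (G *v d))"
    by (simp add: q_def inner_matrix_inverse[OF sym inv] uminus_matrix_vector_mult inner_commute)
  have "0 \<le> p \<bullet> ((W + \<zeta> *\<^sub>R outer f f) *v p) + p \<bullet> ((W ** transpose G) *v q)
           + q \<bullet> ((G ** W) *v p) + q \<bullet> (W *v q)"
    unfolding inner_block2[symmetric] using lmi unfolding psd_def by blast
  moreover have "d \<bullet> ((transpose G ** M ** G - M) *v d)
      = (G *v d) \<bullet> (M *v (G *v d)) - d \<bullet> (M *v d)"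
    by (simp only: matrix_vector_mult_diff_rdistrib inner_diff_right
        matrix_vector_mul_assoc[symmetric] inner_transpose_matrix)
  ultimately show ?thesis
    unfolding P B C D by linarith
qed

theorem theorem4:
  fixes f g :: "real^'n \<Rightarrow> real^'n"
    and A Dg :: "real^'n \<Rightarrow> real^'n^'n"
    and M W :: "real^'n \<Rightarrow> real^'n^'n"
    and c :: "real^'n \<Rightarrow> real" and a :: "real^'n" and b :: real
    and z :: "real^'n \<Rightarrow> real^'n"
    and \<alpha> \<rho> \<zeta> :: "real^'n \<Rightarrow> real"
    and \<beta> :: "real^'n \<Rightarrow> real^'n" and lam :: real
  assumes f_deriv: "\<And>x. (f has_derivative (\<lambda>h. A x *v h)) (at x)"
    and g_deriv: "\<And>x. (g has_derivative (\<lambda>h. Dg x *v h)) (at x)"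
    and c_affine: "\<And>x. c x = a \<bullet> x + b" and a_nz: "a \<noteq> 0"
    and z_normal: "\<And>x. z x \<noteq> 0 \<and> (\<exists>k::real. z x = k *\<^sub>R a)"
    and M_pd: "\<And>x. pd (M x)"
    and M_diff: "\<And>x. M differentiable (at x)"
    and W_def: "\<And>x. W x = matrix_inv (M x)"
    and W_diff: "\<And>x. W differentiable (at x)"
    and h1: "\<And>x. \<alpha> x \<ge> 0 \<and> \<alpha> x *\<^sub>R f x - W x *v z x = c x *\<^sub>R \<beta> x"
    and lam_pos: "lam > 0"
    and h2: "\<And>x. \<rho> x \<ge> 0 \<and>
       nsd (W x ** transpose (A x) + A x ** W x - flow_deriv W f x + (2 * lam) *\<^sub>R W x
            - \<rho> x *\<^sub>R outer (f x) (f x))"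
    and h3: "\<And>x. \<zeta> x \<ge> 0 \<and>
       psd (block2 (W x + \<zeta> x *\<^sub>R outer (f x) (f x)) (W x ** transpose (Dg x))
                   (Dg x ** W x) (W x))"
  shows "transverse_contracting f A M (\<lambda>x dx. sqrt (dx \<bullet> (M x *v dx))) lam
       \<and> (\<forall>x dx. c x = 0 \<and> a \<bullet> dx = 0 \<longrightarrow> f x \<bullet> (M x *v dx) = 0)
       \<and> (\<forall>x dx. dx \<bullet> (M x *v f x) = 0 \<longrightarrow>
            dx \<bullet> ((transpose (Dg x) ** M x ** Dg x - M x) *v dx) \<le> 0)"
proof -
  have sym: "transpose (M x) = M x" for x
    using M_pd unfolding pd_def by blast
  have inv: "M x ** W x = mat 1" for x
    using pd_mult_matrix_inv[OF M_pd] W_def by simp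
  have "transverse_contracting f A M (\<lambda>x dx. sqrt (dx \<bullet> (M x *v dx))) lam"
    using transverse_contracting_of_dual_lmi[OF M_pd M_diff inv W_diff] h2 by blast
  moreover have "f x \<bullet> (M x *v dx) = 0" if "c x = 0" and "a \<bullet> dx = 0" for x dx
  proof -
    obtain k where "z x = k *\<^sub>R a"
      using z_normal by blast
    moreover have "\<alpha> x *\<^sub>R f x = W x *v z x"
      using h1[of x] \<open>c x = 0\<close> by simp
    ultimately show ?thesis
      using metric_normal_orthogonal_to_tangent[OF sym inv] z_normal \<open>a \<bullet> dx = 0\<close> by blast
  qed
  moreover have "dx \<bullet> ((transpose (Dg x) ** M x ** Dg x - M x) *v dx) \<le> 0"
    if "dx \<bullet> (M x *v f x) = 0" for x dx
    using jump_nonexpansive_of_block_lmi[OF sym inv] h3 that by blast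
  ultimately show ?thesis
    by blast
qed

end
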